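(* Let $\mathcal{H}_T=\mathbb{C}^2$, let $\mathcal{H}_E$ be a finite-dimensional Hilbert space with $\dim\mathcal{H}_E\ge 2$ containing two fixed orthonormal vectors $\ket{0}_E,\ket{1}_E$, let $\ket{\chi}\in\mathcal{H}_E$ be a unit vector, let $\mathcal{B}=\{\ket{v_0},\ket{v_1}\}$ be an arbitrary orthonormal basis of $\mathcal{H}_T$, and let $U_F,U_R$ be unitary operators on $\mathcal{H}_T\otimes\mathcal{H}_E$ (a collective attack $(U_F,U_R)$). Then there exists a restricted attack $(q_0,q_1,\eta_0,\eta_1,U)$ with respect to $\mathcal{B}$, with associated forward isometry $\mathcal{F}$, such that the following holds. For every finite-dimensional Hilbert space $\mathcal{H}_A$ (Alice's private system), every unit vector $\ket{\psi}\in\mathcal{H}_A\otimes\mathcal{H}_T$, and each of Bob's two operations $O\in\{I,\ \mathrm{CNOT}\}$ acting on $\mathcal{H}_T\otimes\mathcal{H}_B$ (where $\mathcal{H}_B=\mathbb{C}^2$ is Bob's register, initialized to $\ket{0}_B$, $I$ is the identity ("Reflect") and $\mathrm{CNOT}\ket{t}_T\ket{b}_B=\ket{t}_T\ket{b\oplus t}_B$ models "Measure and Resend"), we have \[ (I_{AB}\otimes U)\,(O\otimes I_E)\,(I_A\otimes\mathcal{F})\ket{\psi}\ket{0}_B =(I_{AB}\otimes U_R)\,(O\otimes I_E)\,(I_A\otimes U_F)\big(\ket{\psi}\otimes\ket{\chi}_E\big)\ket{0}_B , \] (with each operator acting on the indicated tensor factors). Consequently, for any (pure or mixed) input, the joint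 final state of Alice, Bob and Eve is identical under the collective attack $(U_F,U_R)$ and the restricted attack; in particular Alice and Bob cannot distinguish the two attacks, Eve's final system is the same, and the Devetak–Winter key-rate $S(A|E)-H(A|B)$ is the same under both.
   Context: Semi-quantum setting: each round Alice sends a qubit (system $T$) to Bob through a forward channel; Bob either reflects it (identity) or measures it in the computational basis $\{\ket 0,\ket 1\}$ and resends the observed state, which is modeled as a CNOT from $T$ into his private register $B$; the qubit then returns to Alice through a reverse channel. A collective attack is a pair of unitaries $(U_F,U_R)$ on $\mathcal{H}_T\otimes\mathcal{H}_E$: Eve's ancilla starts in $\ket{\chi}_E$, $U_F$ is applied in the forward channel and $U_R$ in the reverse channel. $\mathbb{D}=\{z\in\mathbb{C}:|z|\le1\}$. A restricted attack with respect to an orthonormal basis $\{\ket{v_0},\ket{v_1}\}$ of $\mathcal{H}_T$ is a tuple $(q_0,q_1,\eta_0,\eta_1,U)$ with $q_0,q_1\in[0,1]$, $\eta_0,\eta_1\in\mathbb{D}$ satisfying $q_0\eta_1\sqrt{1-q_1^2}+q_1\overline{\eta_0}\sqrt{1-q_0^2}=0$, and $U$ a unitary on $\mathcal{H}_T\otimes\mathcal{H}_E$. Its forward operation is the linear map $\mathcal{F}:\mathcal{H}_T\to\mathcal{H}_T\otimes\mathcal{H}_E$ defined by $\mathcal{F}\ket{v_0}=q_0\ket{0}_T\ket{0}_E+\sqrt{1-q_0^2}\ket{1}_T\ket{e}_E$ and $\mathcal{F}\ket{v_1}=\sqrt{1-q_1^2}\ket{0}_T\ket{f}_E+q_1\ket{1}_T\ket{0}_E$,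 where $\ket{e}=\eta_0\ket{0}_E+\sqrt{1-|\eta_0|^2}\ket{1}_E$ and $\ket{f}=\eta_1\ket{0}_E+\sqrt{1-|\eta_1|^2}\ket{1}_E$ (the constraint makes $\mathcal{F}$ an isometry); in the reverse channel Eve applies $U$. *)

theory Defs
  imports Complex_Main
begin

text \<open>The qubit spaces H_T and H_B are modelled as bool => complex,
  with False the basis vector |0> and True the basis vector |1>.
  H_E is 'e => complex for a finite type 'e (so dim H_E = CARD('e)).
  Alice's space H_A of dimension n is modelled by nat indices a < n.
  Joint states of A,T,B,E are functions on nat * bool * bool * 'e (order A,T,B,E);
  states of A,T,E are functions on nat * bool * 'e.\<close>

definition cinner :: "('a::finite \<Rightarrow> complex) \<Rightarrow> ('a \<Rightarrow> complex) \<Rightarrow> complex" where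
  "cinner u v = (\<Sum>x\<in>UNIV. cnj (u x) * v x)"

definition orthonormal2 :: "('a::finite \<Rightarrow> complex) \<Rightarrow> ('a \<Rightarrow> complex) \<Rightarrow> bool" where
  "orthonormal2 u v \<longleftrightarrow> cinner u u = 1 \<and> cinner v v = 1 \<and> cinner u v = 0"

definition unitary_op :: "('a::finite \<Rightarrow> 'a \<Rightarrow> complex) \<Rightarrow> bool" where
  "unitary_op M \<longleftrightarrow>
     (\<forall>x y. (\<Sum>z\<in>UNIV. cnj (M z x) * M z y) = (if x = y then 1 else 0)) \<and>
     (\<forall>x y. (\<Sum>z\<in>UNIV. M x z * cnj (M y z)) = (if x = y then 1 else 0))"

definition ket :: "bool \<Rightarrow> bool \<Rightarrow> complex" where
  "ket b = (\<lambda>t. if t = b then 1 else 0)"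

definition restricted_attack ::
  "real \<Rightarrow> real \<Rightarrow> complex \<Rightarrow> complex \<Rightarrow> ((bool \<times> 'e::finite) \<Rightarrow> (bool \<times> 'e) \<Rightarrow> complex) \<Rightarrow> bool" where
  "restricted_attack q0 q1 \<eta>0 \<eta>1 U \<longleftrightarrow>
     0 \<le> q0 \<and> q0 \<le> 1 \<and> 0 \<le> q1 \<and> q1 \<le> 1 \<and> cmod \<eta>0 \<le> 1 \<and> cmod \<eta>1 \<le> 1 \<and>
     complex_of_real q0 * \<eta>1 * complex_of_real (sqrt (1 - q1\<^sup>2))
       + complex_of_real q1 * cnj \<eta>0 * complex_of_real (sqrt (1 - q0\<^sup>2)) = 0 \<and>
     unitary_op U"

text \<open>The forward operation F : H_T -> H_T (x) H_E, defined on the basis v0, v1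
  and extended linearly. e0, e1 are the fixed orthonormal vectors |0>_E, |1>_E.\<close>
definition fwd_map ::
  "('e::finite \<Rightarrow> complex) \<Rightarrow> ('e \<Rightarrow> complex) \<Rightarrow> (bool \<Rightarrow> complex) \<Rightarrow> (bool \<Rightarrow> complex) \<Rightarrow>
   real \<Rightarrow> real \<Rightarrow> complex \<Rightarrow> complex \<Rightarrow> (bool \<Rightarrow> complex) \<Rightarrow> (bool \<times> 'e \<Rightarrow> complex)" where
  "fwd_map e0 e1 v0 v1 q0 q1 \<eta>0 \<eta>1 \<phi> =
    (let ek = (\<lambda>x. \<eta>0 * e0 x + complex_of_real (sqrt (1 - (cmod \<eta>0)\<^sup>2)) * e1 x);
         fk = (\<lambda>x. \<eta>1 * e0 x + complex_of_real (sqrt (1 - (cmod \<eta>1)\<^sup>2)) * e1 x);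
         Fv0 = (\<lambda>(t, x). complex_of_real q0 * ket False t * e0 x
                        + complex_of_real (sqrt (1 - q0\<^sup>2)) * ket True t * ek x);
         Fv1 = (\<lambda>(t, x). complex_of_real (sqrt (1 - q1\<^sup>2)) * ket False t * fk x
                        + complex_of_real q1 * ket True t * e0 x)
     in (\<lambda>tx. cinner v0 \<phi> * Fv0 tx + cinner v1 \<phi> * Fv1 tx))"

definition lift_A :: "((bool \<Rightarrow> complex) \<Rightarrow> (bool \<times> 'e \<Rightarrow> complex)) \<Rightarrow> (nat \<times> bool \<Rightarrow> complex)
    \<Rightarrow> (nat \<times> bool \<times> 'e \<Rightarrow> complex)" where
  "lift_A F \<psi> = (\<lambda>(a, t, x). F (\<lambda>t'. \<psi> (a, t')) (t, x))"

definition apply_ATE :: "((bool \<times> 'e::finite) \<Rightarrow> (bool \<times> 'e) \<Rightarrow> complex) \<Rightarrow> (nat \<times> bool \<times> 'e \<Rightarrow> complex)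
    \<Rightarrow> (nat \<times> bool \<times> 'e \<Rightarrow> complex)" where
  "apply_ATE V \<Phi> = (\<lambda>(a, t, x). \<Sum>(t', x')\<in>UNIV. V (t, x) (t', x') * \<Phi> (a, t', x'))"

definition tensor_E :: "(nat \<times> bool \<Rightarrow> complex) \<Rightarrow> ('e \<Rightarrow> complex) \<Rightarrow> (nat \<times> bool \<times> 'e \<Rightarrow> complex)" where
  "tensor_E \<psi> \<chi> = (\<lambda>(a, t, x). \<psi> (a, t) * \<chi> x)"

definition attach_B0 :: "(nat \<times> bool \<times> 'e \<Rightarrow> complex) \<Rightarrow> (nat \<times> bool \<times> bool \<times> 'e \<Rightarrow> complex)" where
  "attach_B0 \<Phi> = (\<lambda>(a, t, b, x). if b then 0 else \<Phi> (a, t, x))"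

datatype bob_op = Reflect | MeasureResend

definition bob_apply :: "bob_op \<Rightarrow> (nat \<times> bool \<times> bool \<times> 'e \<Rightarrow> complex) \<Rightarrow> (nat \<times> bool \<times> bool \<times> 'e \<Rightarrow> complex)" where
  "bob_apply op s = (case op of
       Reflect \<Rightarrow> s
     | MeasureResend \<Rightarrow> (\<lambda>(a, t, b, x). s (a, t, b \<noteq> t, x)))"

definition eve_apply :: "((bool \<times> 'e::finite) \<Rightarrow> (bool \<times> 'e) \<Rightarrow> complex) \<Rightarrow> (nat \<times> bool \<times> bool \<times> 'e \<Rightarrow> complex)
    \<Rightarrow> (nat \<times> bool \<times> bool \<times> 'e \<Rightarrow> complex)" where
  "eve_apply V s = (\<lambda>(a, t, b, x). \<Sum>(t', x')\<in>UNIV. V (t, x) (t', x') * s (a, t', b, x'))"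

end

theory Submission imports Defs "HOL-Analysis.L2_Norm"
begin

text \<open>Split \<open>w\<^sub>0 = U\<^sub>F (v\<^sub>0 \<otimes> \<chi>) = |0\<rangle> a\<^sub>0 + |1\<rangle> a\<^sub>1\<close> and \<open>w\<^sub>1 = U\<^sub>F (v\<^sub>1 \<otimes> \<chi>) = |0\<rangle> b\<^sub>0 + |1\<rangle> b\<^sub>1\<close>
  along the transit qubit. With \<open>q\<^sub>0 = |a\<^sub>0|\<close>, \<open>q\<^sub>1 = |b\<^sub>1|\<close> and \<open>\<eta>\<^sub>1, \<eta>\<^sub>0\<close> the normalized inner
  products \<open>\<langle>a\<^sub>0, b\<^sub>0\<rangle>\<close>, \<open>\<langle>b\<^sub>1, a\<^sub>1\<rangle>\<close>, each branch of \<open>(F v\<^sub>0, F v\<^sub>1)\<close> has the same Gram matrix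
  as the corresponding branch of \<open>(w\<^sub>0, w\<^sub>1)\<close>, and the isometry constraint on the parameters
  is exactly \<open>\<langle>w\<^sub>0, w\<^sub>1\<rangle> = 0\<close>. Hence unitaries \<open>W\<^sub>0, W\<^sub>1\<close> on \<open>H\<^sub>E\<close> give
  \<open>V F = U\<^sub>F (\<cdot> \<otimes> \<chi>)\<close> for the controlled unitary \<open>V = |0\<rangle>\<langle>0| \<otimes> W\<^sub>0 + |1\<rangle>\<langle>1| \<otimes> W\<^sub>1\<close>.
  Being diagonal in the computational basis of \<open>T\<close>, \<open>V\<close> commutes with Bob's CNOT, so Eve
  may postpone it to the reverse channel and apply \<open>U = U\<^sub>R V\<close> there.\<close>

section \<open>Inner products on finite function spaces\<close>

lemma cinner_add_left[simp]: "cinner (\<lambda>x. u x + v x) w = cinner u w + cinner v w"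
  by (simp add: cinner_def distrib_right sum.distrib)

lemma cinner_add_right[simp]: "cinner w (\<lambda>x. u x + v x) = cinner w u + cinner w v"
  by (simp add: cinner_def distrib_left sum.distrib)

lemma cinner_diff_left[simp]: "cinner (\<lambda>x. u x - v x) w = cinner u w - cinner v w"
  by (simp add: cinner_def left_diff_distrib sum_subtractf)

lemma cinner_diff_right[simp]: "cinner w (\<lambda>x. u x - v x) = cinner w u - cinner w v"
  by (simp add: cinner_def right_diff_distrib sum_subtractf)

lemma cinner_scale_left[simp]: "cinner (\<lambda>x. c * u x) w = cnj c * cinner u w"
  by (simp add: cinner_def sum_distrib_left mult_ac)

lemma cinner_scale_right[simp]: "cinner w (\<lambda>x. c * u x) = c * cinner w u"
  by (simp add: cinner_def sum_distrib_left mult_ac)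

lemma cinner_zero_right[simp]: "cinner w (\<lambda>x. 0) = 0"
  by (simp add: cinner_def)

lemma cnj_cinner: "cnj (cinner u v) = cinner v u"
  by (simp add: cinner_def mult.commute)

lemma cnj_cinner_self[simp]: "cnj (cinner u u) = cinner u u"
  by (rule cnj_cinner)

lemma cinner_self: "cinner u u = complex_of_real (\<Sum>x\<in>UNIV. (cmod (u x))\<^sup>2)"
proof -
  have "cinner u u = (\<Sum>x\<in>UNIV. complex_of_real ((cmod (u x))\<^sup>2))"
    unfolding cinner_def by (intro sum.cong refl) (metis complex_norm_square mult.commute)
  thus ?thesis by simp
qed

lemma cinner_self_eq_0: "cinner u u = 0 \<Longrightarrow> u = (\<lambda>x. 0)"
proof -
  assume "cinner u u = 0"
  hence "(\<Sum>x\<in>UNIV. (cmod (u x))\<^sup>2) = 0" using cinner_self[of u] by (metis of_real_eq_0_iff)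
  hence "\<forall>x\<in>UNIV. (cmod (u x))\<^sup>2 = 0" by (subst (asm) sum_nonneg_eq_0_iff) auto
  thus ?thesis by auto
qed

definition vnorm :: "('a::finite \<Rightarrow> complex) \<Rightarrow> real" where
  "vnorm u = sqrt (Re (cinner u u))"

lemma Re_cinner_self_nonneg: "0 \<le> Re (cinner u u)"
  by (simp add: cinner_self sum_nonneg)

lemma vnorm_nonneg: "0 \<le> vnorm u"
  by (simp add: vnorm_def Re_cinner_self_nonneg)

lemma of_real_vnorm_sq: "complex_of_real ((vnorm u)\<^sup>2) = cinner u u"
  by (simp add: vnorm_def Re_cinner_self_nonneg) (simp add: cinner_self)

lemma cmod_cinner_le: "cmod (cinner u v) \<le> vnorm u * vnorm v"
proof -
  have "cmod (cinner u v) \<le> (\<Sum>x\<in>UNIV. \<bar>cmod (u x)\<bar> * \<bar>cmod (v x)\<bar>)"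
    unfolding cinner_def by (rule order_trans[OF norm_sum]) (simp add: norm_mult)
  also have "\<dots> \<le> L2_set (\<lambda>x. cmod (u x)) UNIV * L2_set (\<lambda>x. cmod (v x)) UNIV"
    by (rule L2_set_mult_ineq)
  also have "\<dots> = vnorm u * vnorm v"
    by (simp add: L2_set_def vnorm_def cinner_self)
  finally show ?thesis .
qed

lemma vnorm_complement:
  assumes "cinner a a + cinner b b = 1"
  shows "sqrt (1 - (vnorm a)\<^sup>2) = vnorm b"
proof -
  have "complex_of_real ((vnorm a)\<^sup>2 + (vnorm b)\<^sup>2) = 1"
    using assms by (simp only: of_real_add of_real_vnorm_sq)
  hence "1 - (vnorm a)\<^sup>2 = (vnorm b)\<^sup>2" by (simp only: of_real_eq_1_iff)
  thus ?thesis using vnorm_nonneg[of b] by simp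
qed

text \<open>When \<open>a\<close> or \<open>b\<close> vanishes this is \<open>0\<close> (division by zero), which keeps the lemmas below
  unconditional.\<close>
definition normalized_inner :: "('a::finite \<Rightarrow> complex) \<Rightarrow> ('a \<Rightarrow> complex) \<Rightarrow> complex" where
  "normalized_inner a b = cinner a b / complex_of_real (vnorm a * vnorm b)"

lemma cmod_normalized_inner_le: "cmod (normalized_inner a b) \<le> 1"
proof (cases "vnorm a * vnorm b = 0")
  case False
  hence "0 < vnorm a * vnorm b" using vnorm_nonneg[of a] vnorm_nonneg[of b] by simp
  thus ?thesis
    using cmod_cinner_le[of a b] by (simp add: normalized_inner_def norm_divide norm_mult vnorm_nonneg)
qed (auto simp: normalized_inner_def)

lemma normalized_inner_scaled:
  "complex_of_real (vnorm a * vnorm b) * normalized_inner a b = cinner a b"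
proof (cases "vnorm a * vnorm b = 0")
  case True
  hence "cinner a b = 0" using cmod_cinner_le[of a b] by auto
  thus ?thesis by (simp add: normalized_inner_def)
qed (simp add: normalized_inner_def)

lemma normalized_inner_commute: "normalized_inner b a = cnj (normalized_inner a b)"
  by (simp add: normalized_inner_def cnj_cinner mult.commute)

definition unit_mix :: "('e::finite \<Rightarrow> complex) \<Rightarrow> ('e \<Rightarrow> complex) \<Rightarrow> complex \<Rightarrow> 'e \<Rightarrow> complex" where
  "unit_mix e0 e1 \<eta> = (\<lambda>x. \<eta> * e0 x + complex_of_real (sqrt (1 - (cmod \<eta>)\<^sup>2)) * e1 x)"

lemma
  assumes "orthonormal2 e0 e1"
  shows cinner_unit_mix_self: "cmod \<eta> \<le> 1 \<Longrightarrow> cinner (unit_mix e0 e1 \<eta>) (unit_mix e0 e1 \<eta>) = 1"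
    and cinner_unit_mix: "cinner e0 (unit_mix e0 e1 \<eta>) = \<eta>"
proof -
  have e: "cinner e0 e0 = 1" "cinner e1 e1 = 1" "cinner e0 e1 = 0" "cinner e1 e0 = 0"
    using assms cnj_cinner[of e0 e1] unfolding orthonormal2_def by auto
  show "cinner e0 (unit_mix e0 e1 \<eta>) = \<eta>"
    using e by (simp add: unit_mix_def)
  assume "cmod \<eta> \<le> 1"
  hence "(sqrt (1 - (cmod \<eta>)\<^sup>2))\<^sup>2 = 1 - (cmod \<eta>)\<^sup>2" by (simp add: power_le_one)
  moreover have "cnj \<eta> * \<eta> = complex_of_real ((cmod \<eta>)\<^sup>2)"
    by (metis complex_norm_square mult.commute)
  ultimately show "cinner (unit_mix e0 e1 \<eta>) (unit_mix e0 e1 \<eta>) = 1"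
    using e by (simp add: unit_mix_def power2_eq_square flip: of_real_mult of_real_add)
qed

section \<open>Matrices and unitaries\<close>

definition mv :: "('a::finite \<Rightarrow> 'a \<Rightarrow> complex) \<Rightarrow> ('a \<Rightarrow> complex) \<Rightarrow> 'a \<Rightarrow> complex" where
  "mv M u = (\<lambda>i. \<Sum>j\<in>UNIV. M i j * u j)"

definition mm :: "('a::finite \<Rightarrow> 'a \<Rightarrow> complex) \<Rightarrow> ('a \<Rightarrow> 'a \<Rightarrow> complex) \<Rightarrow> 'a \<Rightarrow> 'a \<Rightarrow> complex" where
  "mm A B = (\<lambda>i k. \<Sum>j\<in>UNIV. A i j * B j k)"

definition adj :: "('a \<Rightarrow> 'a \<Rightarrow> complex) \<Rightarrow> 'a \<Rightarrow> 'a \<Rightarrow> complex" where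
  "adj M = (\<lambda>i j. cnj (M j i))"

definition idm :: "'a \<Rightarrow> 'a \<Rightarrow> complex" where
  "idm = (\<lambda>i j. if i = j then 1 else 0)"

lemma if_one_zero_mult[simp]: "(if P then 1 else 0) * (x::complex) = (if P then x else 0)"
  by simp

lemma mult_if_zero[simp]: "c * (if P then x else 0) = (if P then c * x else (0::complex))"
  by simp

lemma unitary_op_iff: "unitary_op M \<longleftrightarrow> mm (adj M) M = idm \<and> mm M (adj M) = idm"
  unfolding unitary_op_def mm_def adj_def idm_def fun_eq_iff by simp

lemma mm_assoc: "mm (mm A B) C = mm A (mm B C)"
  unfolding mm_def
  by (intro ext) (simp add: sum_distrib_left sum_distrib_right mult_ac, rule sum.swap)

lemma adj_mm: "adj (mm A B) = mm (adj B) (adj A)"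
  unfolding mm_def adj_def fun_eq_iff by (simp add: mult.commute)

lemma mm_idm_left[simp]: "mm idm A = A"
  unfolding mm_def idm_def fun_eq_iff by (simp add:)

lemma mm_idm_right[simp]: "mm A idm = A"
  unfolding mm_def idm_def fun_eq_iff by (simp add:)

lemma unitary_mm: "unitary_op A \<Longrightarrow> unitary_op B \<Longrightarrow> unitary_op (mm A B)"
  unfolding unitary_op_iff adj_mm by (metis mm_assoc mm_idm_left)

lemma mv_mm: "mv (mm A B) u = mv A (mv B u)"
  unfolding mv_def mm_def
  by (intro ext) (simp add: sum_distrib_left sum_distrib_right mult_ac, rule sum.swap)

lemma mv_idm[simp]: "mv idm u = u"
  unfolding mv_def idm_def fun_eq_iff by (simp add:)

lemma cinner_mv_adj: "cinner (mv M u) w = cinner u (mv (adj M) w)"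
  unfolding cinner_def mv_def adj_def
  by (simp add: sum_distrib_left sum_distrib_right mult_ac) (rule sum.swap)

lemma unitary_cinner: "unitary_op M \<Longrightarrow> cinner (mv M u) (mv M v) = cinner u v"
  by (simp add: cinner_mv_adj unitary_op_iff flip: mv_mm)

lemma mv_add[simp]: "mv M (\<lambda>x. u x + v x) = (\<lambda>i. mv M u i + mv M v i)"
  unfolding mv_def by (simp add: distrib_left sum.distrib)

lemma mv_scale[simp]: "mv M (\<lambda>x. c * u x) = (\<lambda>i. c * mv M u i)"
  unfolding mv_def by (simp add: sum_distrib_left mult_ac)

definition rank_one_update :: "complex \<Rightarrow> ('a::finite \<Rightarrow> complex) \<Rightarrow> 'a \<Rightarrow> 'a \<Rightarrow> complex" where
  "rank_one_update a w = (\<lambda>i j. idm i j + a * w i * cnj (w j))"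

lemma adj_rank_one_update: "adj (rank_one_update a w) = rank_one_update (cnj a) w"
  unfolding adj_def rank_one_update_def idm_def fun_eq_iff by simp

lemma mm_rank_one_update:
  "mm (rank_one_update a w) (rank_one_update b w) = rank_one_update (a + b + a * b * cinner w w) w"
proof -
  have "(\<Sum>j\<in>UNIV. (idm i j + a * w i * cnj (w j)) * (idm j k + b * w j * cnj (w k)))
     = idm i k + (a + b + a * b * cinner w w) * w i * cnj (w k)" for i k
  proof -
    have "(\<Sum>j\<in>UNIV. (idm i j + a * w i * cnj (w j)) * (idm j k + b * w j * cnj (w k)))
      = (\<Sum>j\<in>UNIV. idm i j * idm j k) + (\<Sum>j\<in>UNIV. idm i j * (b * w j * cnj (w k)))
        + (\<Sum>j\<in>UNIV. a * w i * cnj (w j) * idm j k)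
        + (\<Sum>j\<in>UNIV. (a * b * w i * cnj (w k)) * (cnj (w j) * w j))"
      by (simp add: algebra_simps sum.distrib)
    also have "\<dots> = idm i k + b * w i * cnj (w k) + a * w i * cnj (w k)
        + (a * b * w i * cnj (w k)) * cinner w w"
      unfolding idm_def cinner_def by (simp add: sum_distrib_left mult_ac)
    finally show ?thesis by (simp add: algebra_simps)
  qed
  thus ?thesis unfolding mm_def rank_one_update_def fun_eq_iff by simp
qed

lemma mv_rank_one_update: "mv (rank_one_update a w) u = (\<lambda>i. u i + a * cinner w u * w i)"
  unfolding mv_def rank_one_update_def idm_def cinner_def
  by (intro ext) (simp add: ring_distribs sum.distrib sum_distrib_left mult_ac)

text \<open>The unitary multiplying \<open>w\<close> by the phase \<open>\<alpha>\<close> and fixing \<open>w\<^sup>\<bottom>\<close>; for \<open>\<alpha> = -1\<close> it is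
  the Householder reflection along \<open>w\<close>.\<close>
definition phase_along :: "complex \<Rightarrow> ('a::finite \<Rightarrow> complex) \<Rightarrow> 'a \<Rightarrow> 'a \<Rightarrow> complex" where
  "phase_along \<alpha> w = rank_one_update ((\<alpha> - 1) / cinner w w) w"

lemma unitary_phase_along:
  assumes "cmod \<alpha> = 1"
  shows "unitary_op (phase_along \<alpha> w)"
proof -
  let ?N = "cinner w w"
  let ?a = "(\<alpha> - 1) / ?N"
  have "cnj ?a + ?a + cnj ?a * ?a * ?N = 0"
  proof (cases "?N = 0")
    case False
    have "\<alpha> * cnj \<alpha> = 1" using assms complex_norm_square[of \<alpha>] by simp
    moreover have "cnj ?a = (cnj \<alpha> - 1) / ?N" by simp
    ultimately show ?thesis using False by (simp add: field_simps)
  qed simp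
  thus ?thesis
    unfolding unitary_op_iff phase_along_def adj_rank_one_update mm_rank_one_update
    by (simp add: algebra_simps rank_one_update_def idm_def)
qed

lemma mv_phase_along_self: "mv (phase_along \<alpha> w) w = (\<lambda>i. \<alpha> * w i)"
proof (cases "cinner w w = 0")
  case True
  hence "w = (\<lambda>x. 0)" by (rule cinner_self_eq_0)
  thus ?thesis by (simp add: phase_along_def mv_rank_one_update)
qed (simp add: phase_along_def mv_rank_one_update field_simps)

lemma mv_phase_along_orthogonal: "cinner w u = 0 \<Longrightarrow> mv (phase_along \<alpha> w) u = u"
  by (simp add: phase_along_def mv_rank_one_update)

text \<open>A phase turns \<open>\<langle>x, y\<rangle>\<close> real, after which the reflection along \<open>\<beta> x - y\<close> swaps
  \<open>\<beta> x\<close> and \<open>y\<close>.\<close>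
lemma unitary_maps_vector:
  fixes x y :: "'a::finite \<Rightarrow> complex"
  assumes "cinner x x = cinner y y"
  shows "\<exists>W. unitary_op W \<and> mv W x = y \<and>
    (\<forall>u. cinner x u = 0 \<longrightarrow> cinner y u = 0 \<longrightarrow> mv W u = u)"
proof -
  define \<beta> where "\<beta> = (if cinner x y = 0 then 1 else cinner x y / complex_of_real (cmod (cinner x y)))"
  let ?r = "complex_of_real (cmod (cinner x y))"
  have \<beta>_unit: "cmod \<beta> = 1" unfolding \<beta>_def by (simp add: norm_divide)
  have \<beta>_real: "cnj \<beta> * cinner x y = ?r"
  proof (cases "cinner x y = 0")
    case False
    have "cnj (cinner x y) * cinner x y = complex_of_real ((cmod (cinner x y))\<^sup>2)"
      by (metis complex_norm_square mult.commute)
    thus ?thesis using False unfolding \<beta>_def by (simp add: field_simps power2_eq_square)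
  qed (simp add: \<beta>_def)
  have \<beta>\<beta>: "cnj \<beta> * \<beta> = 1" using \<beta>_unit complex_norm_square[of \<beta>] by (simp add: mult.commute)
  define d where "d = (\<lambda>i. \<beta> * x i - y i)"
  define W1 where "W1 = phase_along \<beta> x"
  define W2 where "W2 = phase_along (-1) d"
  have d_\<beta>x: "cinner d (\<lambda>i. \<beta> * x i) = cinner y y - ?r"
    unfolding d_def using assms \<beta>_real \<beta>\<beta>
    by (simp add: cnj_cinner[of y x, symmetric] mult.assoc[symmetric])
       (metis \<beta>_real complex_cnj_cnj complex_cnj_mult complex_cnj_complex_of_real)
  have d_d: "cinner d d = 2 * (cinner y y - ?r)"
    unfolding d_def using assms \<beta>_real \<beta>\<beta>
    apply (simp add: cnj_cinner[of y x, symmetric] mult.assoc[symmetric])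
    by (metis (no_types, lifting) \<beta>_real complex_cnj_cnj complex_cnj_mult complex_cnj_complex_of_real
        mult_2 diff_add_eq diff_diff_eq2 add_diff_eq)
  have "mv W2 (\<lambda>i. \<beta> * x i) = y"
  proof (cases "cinner d d = 0")
    case True
    hence "d = (\<lambda>i. 0)" by (rule cinner_self_eq_0)
    hence "(\<lambda>i. \<beta> * x i) = y" unfolding d_def fun_eq_iff by simp
    thus ?thesis using True unfolding W2_def phase_along_def by (simp add: mv_rank_one_update)
  next
    case False
    have "mv W2 (\<lambda>i. \<beta> * x i)
        = (\<lambda>i. \<beta> * x i + ((-1 - 1) / cinner d d) * cinner d (\<lambda>i. \<beta> * x i) * d i)"
      unfolding W2_def phase_along_def by (rule mv_rank_one_update)
    also have "((-1 - 1) / cinner d d) * cinner d (\<lambda>i. \<beta> * x i) = -1"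
      using False unfolding d_\<beta>x d_d by (simp add: field_simps)
    finally show ?thesis unfolding d_def by simp
  qed
  moreover have "mv W1 x = (\<lambda>i. \<beta> * x i)" unfolding W1_def by (rule mv_phase_along_self)
  moreover have "mv (mm W2 W1) u = u" if "cinner x u = 0" "cinner y u = 0" for u
  proof -
    have "cinner d u = 0" unfolding d_def using that by simp
    thus ?thesis using that by (simp add: mv_mm W1_def W2_def mv_phase_along_orthogonal)
  qed
  moreover have "unitary_op (mm W2 W1)"
    unfolding W1_def W2_def by (intro unitary_mm unitary_phase_along \<beta>_unit) simp
  ultimately show ?thesis by (metis mv_mm)
qed

lemma unitary_maps_pair:
  fixes x1 x2 y1 y2 :: "'a::finite \<Rightarrow> complex"
  assumes gram1: "cinner x1 x1 = cinner y1 y1" and gram2: "cinner x2 x2 = cinner y2 y2"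
    and gram12: "cinner x1 x2 = cinner y1 y2"
  shows "\<exists>W. unitary_op W \<and> mv W x1 = y1 \<and> mv W x2 = y2"
proof -
  obtain W1 where W1: "unitary_op W1" "mv W1 x1 = y1"
    using unitary_maps_vector[OF gram1] by blast
  define z where "z = mv W1 x2"
  have y1_z: "cinner y1 z = cinner y1 y2"
    unfolding z_def using unitary_cinner[OF W1(1), of x1 x2] W1(2) gram12 by simp
  hence z_y1: "cinner z y1 = cinner y2 y1" by (metis cnj_cinner)
  have z_z: "cinner z z = cinner y2 y2"
    unfolding z_def using unitary_cinner[OF W1(1), of x2 x2] gram2 by simp
  txt \<open>Project \<open>z\<close> and \<open>y\<^sub>2\<close> onto \<open>y\<^sub>1\<^sup>\<bottom>\<close> and match the projections by a unitary fixing \<open>y\<^sub>1\<close>.\<close>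
  define p where "p = cinner y1 y2 / cinner y1 y1"
  define zp where "zp = (\<lambda>i. z i - p * y1 i)"
  define yp where "yp = (\<lambda>i. y2 i - p * y1 i)"
  have "cinner zp zp = cinner yp yp"
    unfolding zp_def yp_def using y1_z z_y1 z_z by simp
  then obtain W2 where W2: "unitary_op W2" "mv W2 zp = yp"
    and W2_fix: "\<And>u. cinner zp u = 0 \<Longrightarrow> cinner yp u = 0 \<Longrightarrow> mv W2 u = u"
    using unitary_maps_vector by blast
  have "cinner zp y1 = 0 \<and> cinner yp y1 = 0"
  proof (cases "cinner y1 y1 = 0")
    case True
    hence "y1 = (\<lambda>i. 0)" by (rule cinner_self_eq_0)
    thus ?thesis by simp
  next
    case False
    have "cnj p = cinner y2 y1 / cinner y1 y1"
      unfolding p_def by (simp add: cnj_cinner)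
    thus ?thesis unfolding zp_def yp_def using False z_y1 by simp
  qed
  hence W2_y1: "mv W2 y1 = y1" using W2_fix by blast
  have "z = (\<lambda>i. zp i + p * y1 i)" unfolding zp_def by simp
  hence "mv W2 z = y2" using W2 W2_y1 by (simp add: yp_def)
  thus ?thesis
    by (intro exI[of _ "mm W2 W1"]) (simp add: unitary_mm W1 W2 mv_mm W2_y1 flip: z_def)
qed

section \<open>The transit qubit and Eve's system\<close>

lemma cinner_bool: "cinner (u::bool \<Rightarrow> complex) v = cnj (u False) * v False + cnj (u True) * v True"
  unfolding cinner_def UNIV_bool by simp

lemma orthonormal2_expansion:
  fixes v0 v1 \<phi> :: "bool \<Rightarrow> complex"
  assumes "orthonormal2 v0 v1"
  shows "\<phi> = (\<lambda>t. cinner v0 \<phi> * v0 t + cinner v1 \<phi> * v1 t)"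
proof -
  have n0: "cinner v0 v0 = 1" and n1: "cinner v1 v1 = 1" and o: "cinner v0 v1 = 0"
    using assms unfolding orthonormal2_def by auto
  have o': "cinner v1 v0 = 0" using o cnj_cinner[of v0 v1] by simp
  define r where "r = (\<lambda>t. \<phi> t - (cinner v0 \<phi> * v0 t + cinner v1 \<phi> * v1 t))"
  define a where "a = v0 False"
  define b where "b = v0 True"
  define c where "c = v1 False"
  define d where "d = v1 True"
  have "cinner v0 r = 0" "cinner v1 r = 0" unfolding r_def using n0 n1 o o' by simp_all
  hence e1: "cnj a * r False + cnj b * r True = 0" and e2: "cnj c * r False + cnj d * r True = 0"
    unfolding cinner_bool a_def b_def c_def d_def by simp_all
  txt \<open>The Gram conditions make the determinant of \<open>(v\<^sub>0, v\<^sub>1)\<close> a unit (Lagrange's identity).\<close>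
  have "(a * d - b * c) * (cnj a * cnj d - cnj b * cnj c)
      = (cnj a * a + cnj b * b) * (cnj c * c + cnj d * d)
        - (cnj a * c + cnj b * d) * cnj (cnj a * c + cnj b * d)"
    by (simp add: algebra_simps)
  also have "\<dots> = 1"
    using n0 n1 o unfolding a_def b_def c_def d_def cinner_bool by simp
  finally have D: "cnj a * cnj d - cnj b * cnj c \<noteq> 0" by auto
  have "r False * (cnj a * cnj d - cnj b * cnj c)
      = cnj d * (cnj a * r False + cnj b * r True) - cnj b * (cnj c * r False + cnj d * r True)"
    by algebra
  hence "r False = 0" using e1 e2 D by simp
  moreover have "r True * (cnj a * cnj d - cnj b * cnj c)
      = cnj a * (cnj c * r False + cnj d * r True) - cnj c * (cnj a * r False + cnj b * r True)"
    by algebra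
  hence "r True = 0" using e1 e2 D by simp
  ultimately have "r t = 0" for t by (cases t) simp_all
  thus ?thesis unfolding r_def fun_eq_iff by (simp add: algebra_simps)
qed

lemma sum_bool_prod:
  "(\<Sum>p\<in>(UNIV::(bool \<times> 'e::finite) set). f p) = (\<Sum>x\<in>UNIV. f (False, x)) + (\<Sum>x\<in>UNIV. f (True, x))"
proof -
  have "(\<Sum>p\<in>(UNIV::(bool \<times> 'e) set). f p) = (\<Sum>t\<in>UNIV. \<Sum>x\<in>UNIV. f (t, x))"
    by (simp add: sum.cartesian_product flip: UNIV_Times_UNIV)
  thus ?thesis unfolding UNIV_bool by simp
qed

lemma cinner_bool_prod: "cinner (w :: bool \<times> 'e::finite \<Rightarrow> complex) w' =
   cinner (\<lambda>x. w (False, x)) (\<lambda>x. w' (False, x)) + cinner (\<lambda>x. w (True, x)) (\<lambda>x. w' (True, x))"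
  unfolding cinner_def by (rule sum_bool_prod)

definition tens :: "(bool \<Rightarrow> complex) \<Rightarrow> ('e \<Rightarrow> complex) \<Rightarrow> bool \<times> 'e \<Rightarrow> complex" where
  "tens v \<chi> = (\<lambda>p. v (fst p) * \<chi> (snd p))"

lemma cinner_tens: "cinner (tens u (\<chi>::'e::finite \<Rightarrow> complex)) (tens v \<chi>) = cinner u v * cinner \<chi> \<chi>"
  unfolding cinner_bool_prod tens_def cinner_bool
  by (simp add: mult.commute[of "\<chi> _"]) (simp add: algebra_simps)

lemma orthonormal2_unitary_tens:
  assumes "unitary_op U" "orthonormal2 v0 v1" "cinner \<chi> \<chi> = 1"
  shows "orthonormal2 (mv U (tens v0 \<chi>)) (mv U (tens v1 \<chi>))"
  using assms unfolding orthonormal2_def by (simp add: unitary_cinner cinner_tens)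

lemma mv_tens_expansion:
  assumes "orthonormal2 v0 v1"
  shows "mv U (tens \<phi> \<chi>) = (\<lambda>p. cinner v0 \<phi> * mv U (tens v0 \<chi>) p + cinner v1 \<phi> * mv U (tens v1 \<chi>) p)"
proof -
  have "tens \<phi> \<chi> = (\<lambda>p. cinner v0 \<phi> * tens v0 \<chi> p + cinner v1 \<phi> * tens v1 \<chi> p)"
    by (subst orthonormal2_expansion[OF assms, of \<phi>]) (simp add: tens_def algebra_simps)
  thus ?thesis by simp
qed

definition controlled :: "(bool \<Rightarrow> 'e \<Rightarrow> 'e \<Rightarrow> complex) \<Rightarrow> bool \<times> 'e \<Rightarrow> bool \<times> 'e \<Rightarrow> complex" where
  "controlled W = (\<lambda>p q. if fst p = fst q then W (fst p) (snd p) (snd q) else 0)"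

lemma mm_controlled:
  "mm (controlled A) (controlled B) = controlled (\<lambda>t. mm (A t) (B t :: 'e::finite \<Rightarrow> 'e \<Rightarrow> complex))"
proof (intro ext)
  fix p q :: "bool \<times> 'e"
  obtain t x t' x' where "p = (t, x)" "q = (t', x')" by fastforce
  thus "mm (controlled A) (controlled B) p q = controlled (\<lambda>t. mm (A t) (B t)) p q"
    by (cases t; cases t') (simp_all add: mm_def controlled_def sum_bool_prod)
qed

lemma adj_controlled: "adj (controlled A) = controlled (\<lambda>t. adj (A t))"
  unfolding adj_def controlled_def fun_eq_iff by auto

lemma controlled_idm: "controlled (\<lambda>t. idm) = idm"
  unfolding idm_def controlled_def fun_eq_iff by (auto simp: prod_eq_iff)

lemma unitary_controlled:
  "(\<And>t. unitary_op (W t :: 'e::finite \<Rightarrow> 'e \<Rightarrow> complex)) \<Longrightarrow> unitary_op (controlled W)"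
  unfolding unitary_op_iff mm_controlled adj_controlled by (simp add: controlled_idm)

lemma mv_controlled:
  "mv (controlled W) f (t, x) = mv (W t :: 'e::finite \<Rightarrow> 'e \<Rightarrow> complex) (\<lambda>x'. f (t, x')) x"
  unfolding mv_def controlled_def sum_bool_prod by (cases t) auto

section \<open>Choosing the restricted attack\<close>

lemma fwd_map_apply:
  "fwd_map e0 e1 v0 v1 q0 q1 \<eta>0 \<eta>1 \<phi> (t, x) =
     cinner v0 \<phi> * (if t then complex_of_real (sqrt (1 - q0\<^sup>2)) * unit_mix e0 e1 \<eta>0 x
                     else complex_of_real q0 * e0 x)
   + cinner v1 \<phi> * (if t then complex_of_real q1 * e0 x
                     else complex_of_real (sqrt (1 - q1\<^sup>2)) * unit_mix e0 e1 \<eta>1 x)"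
  unfolding fwd_map_def unit_mix_def ket_def by (cases t) simp_all

text \<open>Each branch of \<open>F v\<^sub>0, F v\<^sub>1\<close> has the form \<open>(|a| e\<^sub>0, |b| f)\<close> with \<open>\<langle>e\<^sub>0, f\<rangle> = \<eta>\<close>.\<close>
lemma unitary_maps_branch:
  assumes "orthonormal2 e0 e1"
  shows "\<exists>W. unitary_op W \<and> mv W (\<lambda>x. complex_of_real (vnorm a) * e0 x) = a \<and>
    mv W (\<lambda>x. complex_of_real (vnorm b) * unit_mix e0 e1 (normalized_inner a b) x) = b"
proof (rule unitary_maps_pair)
  have scaled: "cinner (\<lambda>x. complex_of_real (vnorm c) * u x) (\<lambda>x. complex_of_real (vnorm c) * u x)
      = cinner c c" if "cinner u u = 1" for c :: "'a \<Rightarrow> complex" and u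
  proof -
    have "cinner (\<lambda>x. complex_of_real (vnorm c) * u x) (\<lambda>x. complex_of_real (vnorm c) * u x)
        = complex_of_real ((vnorm c)\<^sup>2)"
      using that by (simp add: power2_eq_square)
    thus ?thesis by (simp only: of_real_vnorm_sq)
  qed
  show "cinner (\<lambda>x. complex_of_real (vnorm a) * e0 x) (\<lambda>x. complex_of_real (vnorm a) * e0 x) = cinner a a"
    by (rule scaled) (use assms in \<open>simp add: orthonormal2_def\<close>)
  show "cinner (\<lambda>x. complex_of_real (vnorm b) * unit_mix e0 e1 (normalized_inner a b) x)
      (\<lambda>x. complex_of_real (vnorm b) * unit_mix e0 e1 (normalized_inner a b) x) = cinner b b"
    by (rule scaled) (rule cinner_unit_mix_self[OF assms cmod_normalized_inner_le])
  show "cinner (\<lambda>x. complex_of_real (vnorm a) * e0 x)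
      (\<lambda>x. complex_of_real (vnorm b) * unit_mix e0 e1 (normalized_inner a b) x) = cinner a b"
    using normalized_inner_scaled[of a b] cinner_unit_mix[OF assms, of "normalized_inner a b"]
    by (simp add: mult.assoc)
qed

lemma restricted_attack_simulating_forward:
  fixes e0 e1 :: "'e::finite \<Rightarrow> complex" and w0 w1 :: "bool \<times> 'e \<Rightarrow> complex"
  assumes onE: "orthonormal2 e0 e1" and onW: "orthonormal2 w0 w1"
  shows "\<exists>q0 q1 \<eta>0 \<eta>1 W. restricted_attack q0 q1 \<eta>0 \<eta>1 (controlled W) \<and>
    (\<forall>\<phi>. mv (controlled W) (fwd_map e0 e1 v0 v1 q0 q1 \<eta>0 \<eta>1 \<phi>)
         = (\<lambda>p. cinner v0 \<phi> * w0 p + cinner v1 \<phi> * w1 p))"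
proof -
  define a0 where "a0 = (\<lambda>x. w0 (False, x))"
  define a1 where "a1 = (\<lambda>x. w0 (True, x))"
  define b0 where "b0 = (\<lambda>x. w1 (False, x))"
  define b1 where "b1 = (\<lambda>x. w1 (True, x))"
  have "cinner a0 a0 + cinner a1 a1 = 1" "cinner b1 b1 + cinner b0 b0 = 1"
    and ab: "cinner a0 b0 + cinner a1 b1 = 0"
    using onW unfolding orthonormal2_def cinner_bool_prod a0_def a1_def b0_def b1_def
    by (simp_all add: add.commute)
  hence s0: "sqrt (1 - (vnorm a0)\<^sup>2) = vnorm a1" and s1: "sqrt (1 - (vnorm b1)\<^sup>2) = vnorm b0"
    by (simp_all add: vnorm_complement)
  define q0 where "q0 = vnorm a0"
  define q1 where "q1 = vnorm b1"
  define \<eta>0 where "\<eta>0 = normalized_inner b1 a1"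
  define \<eta>1 where "\<eta>1 = normalized_inner a0 b0"
  obtain WF where WF: "unitary_op WF" "mv WF (\<lambda>x. complex_of_real q0 * e0 x) = a0"
    "mv WF (\<lambda>x. complex_of_real (sqrt (1 - q1\<^sup>2)) * unit_mix e0 e1 \<eta>1 x) = b0"
    using unitary_maps_branch[OF onE, of a0 b0] unfolding q0_def q1_def \<eta>1_def s1 by blast
  obtain WT where WT: "unitary_op WT" "mv WT (\<lambda>x. complex_of_real q1 * e0 x) = b1"
    "mv WT (\<lambda>x. complex_of_real (sqrt (1 - q0\<^sup>2)) * unit_mix e0 e1 \<eta>0 x) = a1"
    using unitary_maps_branch[OF onE, of b1 a1] unfolding q0_def q1_def \<eta>0_def s0 by blast
  define W where "W t = (if t then WT else WF)" for t
  have "complex_of_real q0 * \<eta>1 * complex_of_real (sqrt (1 - q1\<^sup>2))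
      + complex_of_real q1 * cnj \<eta>0 * complex_of_real (sqrt (1 - q0\<^sup>2)) = cinner a0 b0 + cinner a1 b1"
    using normalized_inner_scaled[of a0 b0] normalized_inner_scaled[of a1 b1]
    unfolding q0_def q1_def \<eta>0_def \<eta>1_def s0 s1 normalized_inner_commute[of b1 a1]
    by (simp add: mult_ac)
  moreover have "0 \<le> q0 \<and> q0 \<le> 1 \<and> 0 \<le> q1 \<and> q1 \<le> 1"
  proof -
    have "0 \<le> sqrt (1 - q0\<^sup>2)" "0 \<le> sqrt (1 - q1\<^sup>2)"
      unfolding q0_def q1_def s0 s1 by (simp_all add: vnorm_nonneg)
    hence "q0\<^sup>2 \<le> 1" "q1\<^sup>2 \<le> 1" by simp_all
    thus ?thesis unfolding q0_def q1_def by (simp add: vnorm_nonneg abs_square_le_1)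
  qed
  moreover have "unitary_op (controlled W)"
    by (rule unitary_controlled) (simp add: W_def WF WT)
  ultimately have "restricted_attack q0 q1 \<eta>0 \<eta>1 (controlled W)"
    unfolding restricted_attack_def \<eta>0_def \<eta>1_def using ab by (simp add: cmod_normalized_inner_le)
  moreover have "mv (controlled W) (fwd_map e0 e1 v0 v1 q0 q1 \<eta>0 \<eta>1 \<phi>) (t, x)
      = cinner v0 \<phi> * w0 (t, x) + cinner v1 \<phi> * w1 (t, x)" for \<phi> t x
  proof (cases t)
    case True
    thus ?thesis unfolding mv_controlled fwd_map_apply 
      using fun_cong[OF WT(2), of x] fun_cong[OF WT(3), of x] by (simp add: W_def a1_def b1_def)
  next
    case False
    thus ?thesis unfolding mv_controlled fwd_map_apply 
      using fun_cong[OF WF(2), of x] fun_cong[OF WF(3), of x] by (simp add: W_def a0_def b0_def)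
  qed
  ultimately show ?thesis by fast
qed

lemma restricted_attack_mm:
  "unitary_op U \<Longrightarrow> restricted_attack q0 q1 \<eta>0 \<eta>1 V \<Longrightarrow> restricted_attack q0 q1 \<eta>0 \<eta>1 (mm U V)"
  unfolding restricted_attack_def by (simp add: unitary_mm)

section \<open>The protocol round\<close>

lemma eve_apply_mv: "eve_apply V s = (\<lambda>(a, t, b, x). mv V (\<lambda>p. s (a, fst p, b, snd p)) (t, x))"
  unfolding eve_apply_def mv_def by (intro ext) (auto simp: split_beta)

lemma eve_apply_mm: "eve_apply (mm A B) s = eve_apply A (eve_apply B s)"
  unfolding eve_apply_mv by (auto simp: mv_mm split_beta)

lemma eve_apply_controlled_bob_apply:
  "eve_apply (controlled W) (bob_apply bop s) = bob_apply bop (eve_apply (controlled W) s)"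
proof (cases bop)
  case MeasureResend
  show ?thesis
  proof (intro ext)
    fix z :: "nat \<times> bool \<times> bool \<times> 'a"
    obtain a t b x where z: "z = (a, t, b, x)" by (cases z) auto
    show "eve_apply (controlled W) (bob_apply bop s) z = bob_apply bop (eve_apply (controlled W) s) z"
      unfolding z MeasureResend
      by (cases t) (simp_all add: eve_apply_def bob_apply_def controlled_def sum_bool_prod)
  qed
qed (simp add: bob_apply_def)

lemma eve_apply_attach_B0: "eve_apply V (attach_B0 \<Phi>) = attach_B0 (apply_ATE V \<Phi>)"
  unfolding eve_apply_def attach_B0_def apply_ATE_def by (intro ext) (auto simp: split_beta)

lemma apply_ATE_mv: "apply_ATE V \<Phi> = (\<lambda>(a, t, x). mv V (\<lambda>p. \<Phi> (a, fst p, snd p)) (t, x))"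
  unfolding apply_ATE_def mv_def by (intro ext) (auto simp: split_beta)

lemma apply_ATE_lift_A:
  assumes "\<And>\<phi>. mv V (F \<phi>) = mv U (tens \<phi> \<chi>)"
  shows "apply_ATE V (lift_A F \<psi>) = apply_ATE U (tensor_E \<psi> \<chi>)"
proof -
  have "mv V (\<lambda>p. lift_A F \<psi> (a, fst p, snd p)) = mv U (\<lambda>p. tensor_E \<psi> \<chi> (a, fst p, snd p))" for a
  proof -
    have "(\<lambda>p. lift_A F \<psi> (a, fst p, snd p)) = F (\<lambda>t. \<psi> (a, t))"
      and "(\<lambda>p. tensor_E \<psi> \<chi> (a, fst p, snd p)) = tens (\<lambda>t. \<psi> (a, t)) \<chi>"
      unfolding lift_A_def tensor_E_def tens_def by (simp_all add: split_beta)
    thus ?thesis by (simp only: assms)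
  qed
  thus ?thesis unfolding apply_ATE_mv by simp
qed

theorem theorem1:
  fixes e0 e1 \<chi> :: "'e::finite \<Rightarrow> complex"
    and v0 v1 :: "bool \<Rightarrow> complex"
    and UF UR :: "(bool \<times> 'e) \<Rightarrow> (bool \<times> 'e) \<Rightarrow> complex"
  assumes "card (UNIV :: 'e set) \<ge> 2"
    and "orthonormal2 e0 e1"
    and "cinner \<chi> \<chi> = 1"
    and "orthonormal2 v0 v1"
    and "unitary_op UF"
    and "unitary_op UR"
  shows "\<exists>q0 q1 \<eta>0 \<eta>1 U. restricted_attack q0 q1 \<eta>0 \<eta>1 U \<and>
    (\<forall>(n::nat) (\<psi>::nat \<times> bool \<Rightarrow> complex) bop.
       (\<forall>a t. n \<le> a \<longrightarrow> \<psi> (a, t) = 0) \<longrightarrow>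
       (\<Sum>a<n. \<Sum>t\<in>UNIV. (cmod (\<psi> (a, t)))\<^sup>2) = 1 \<longrightarrow>
       eve_apply U (bob_apply bop (attach_B0 (lift_A (fwd_map e0 e1 v0 v1 q0 q1 \<eta>0 \<eta>1) \<psi>)))
       = eve_apply UR (bob_apply bop (attach_B0 (apply_ATE UF (tensor_E \<psi> \<chi>)))))"
proof -
  obtain q0 q1 \<eta>0 \<eta>1 W where attack: "restricted_attack q0 q1 \<eta>0 \<eta>1 (controlled W)"
    and forward: "\<And>\<phi>. mv (controlled W) (fwd_map e0 e1 v0 v1 q0 q1 \<eta>0 \<eta>1 \<phi>)
       = (\<lambda>p. cinner v0 \<phi> * mv UF (tens v0 \<chi>) p + cinner v1 \<phi> * mv UF (tens v1 \<chi>) p)"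
    using restricted_attack_simulating_forward[OF assms(2) orthonormal2_unitary_tens[OF assms(5,4,3)]]
    by blast
  have "apply_ATE (controlled W) (lift_A (fwd_map e0 e1 v0 v1 q0 q1 \<eta>0 \<eta>1) \<psi>)
      = apply_ATE UF (tensor_E \<psi> \<chi>)" for \<psi>
    by (rule apply_ATE_lift_A) (unfold forward, rule mv_tens_expansion[OF assms(4), symmetric])
  hence "eve_apply (mm UR (controlled W))
      (bob_apply bop (attach_B0 (lift_A (fwd_map e0 e1 v0 v1 q0 q1 \<eta>0 \<eta>1) \<psi>)))
    = eve_apply UR (bob_apply bop (attach_B0 (apply_ATE UF (tensor_E \<psi> \<chi>))))" for bop \<psi>
    by (simp add: eve_apply_mm eve_apply_controlled_bob_apply eve_apply_attach_B0)
  thus ?thesis using restricted_attack_mm[OF assms(6) attack] by blast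
qed

end
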